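(* Let $\Delta_0, \ldots, \Delta_n$ be a sequence of positive integers with $n \geq 1$. Then there exist indices $\alpha, \beta \in \{0,1,\ldots,n\}$ such that: (1) $\alpha < \beta$; (2) $\Delta_j > \max(\Delta_\alpha, \Delta_\beta)$ for every $j \in \{0,\ldots,\alpha-1\} \cup \{\beta+1,\ldots,n\}$; (3) the inequality $\Delta_t < \max(\Delta_\alpha,\Delta_\beta)$ holds for at most one index $t \in \{\alpha, \alpha+1, \ldots, \beta\}$. *)

theory Defs
  imports Main
begin

end

theory Submission
  imports Defs
begin

text \<open>If two or more indices of a window lie strictly below the larger endpoint value \<open>M\<close>,
  pass to the span between the first and the last of them. The discarded indices have values at
  least \<open>M\<close>, above both new endpoint values, so the outside still dominates; and one old
  endpoint attains \<open>M\<close>, so the window gets strictly shorter. Starting from \<open>[0, n]\<close>, whose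
  outside is empty, this terminates.\<close>

definition dominated_outside :: "(nat \<Rightarrow> 'a::linorder) \<Rightarrow> nat \<Rightarrow> nat \<Rightarrow> nat \<Rightarrow> bool" where
  "dominated_outside D n \<alpha> \<beta> \<longleftrightarrow> \<alpha> < \<beta> \<and> \<beta> \<le> n \<and>
     (\<forall>j \<in> {0..<\<alpha>} \<union> {\<beta><..n}. D j > max (D \<alpha>) (D \<beta>))"

abbreviation below_ends :: "(nat \<Rightarrow> 'a::linorder) \<Rightarrow> nat \<Rightarrow> nat \<Rightarrow> nat set" where
  "below_ends D \<alpha> \<beta> \<equiv> {t \<in> {\<alpha>..\<beta>}. D t < max (D \<alpha>) (D \<beta>)}"

lemma dominated_outside_shrink:
  assumes dom: "dominated_outside D n a b"
    and many: "\<not> card (below_ends D a b) \<le> 1"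
  shows "dominated_outside D n (Min (below_ends D a b)) (Max (below_ends D a b))"
    and "Max (below_ends D a b) - Min (below_ends D a b) < b - a"
proof -
  define M where "M = max (D a) (D b)"
  define S where "S = below_ends D a b"
  define a' where "a' = Min S"
  define b' where "b' = Max S"
  have fin: "finite S"
    unfolding S_def by simp
  obtain x y where xy: "x \<in> S" "y \<in> S" "x \<noteq> y"
    using many fin card_le_Suc0_iff_eq[of S] unfolding S_def by auto
  then have "a' \<le> min x y" "max x y \<le> b'"
    using fin unfolding a'_def b'_def by auto
  then have "a' < b'"
    using \<open>x \<noteq> y\<close> by simp
  have "S \<noteq> {}"
    using xy by auto
  then have "a' \<in> S" "b' \<in> S"
    using fin unfolding a'_def b'_def by simp_all
  then have ends_below: "D a' < M" "D b' < M" and "a \<le> a'" "b' \<le> b"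
    unfolding S_def M_def by auto
  have "a' \<noteq> a \<or> b' \<noteq> b"
    using ends_below unfolding M_def by (auto simp: less_max_iff_disj)
  then have "b' - a' < b - a"
    using \<open>a \<le> a'\<close> \<open>b' \<le> b\<close> \<open>a' < b'\<close> by linarith
  obtain b_le_n: "b \<le> n"
    and outside: "\<And>j. j \<in> {0..<a} \<union> {b<..n} \<Longrightarrow> D j > M"
    using dom unfolding dominated_outside_def M_def by blast
  have "D j > max (D a') (D b')" if j: "j \<in> {0..<a'} \<union> {b'<..n}" for j
  proof (cases "j \<in> {a..b}")
    case True
    have "j \<notin> S"
    proof
      assume "j \<in> S"
      then have "a' \<le> j" "j \<le> b'"
        using fin unfolding a'_def b'_def by simp_all
      then show False
        using j by auto
    qed
    then have "\<not> D j < M"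
      using True unfolding S_def M_def by blast
    then show ?thesis
      using ends_below by (meson max_less_iff_conj not_less order.strict_trans2)
  next
    case False
    then have "j \<in> {0..<a} \<union> {b<..n}"
      using j \<open>a' < b'\<close> \<open>b' \<le> b\<close> b_le_n by auto
    then show ?thesis
      using outside ends_below by (meson max_less_iff_conj order.strict_trans)
  qed
  then have "dominated_outside D n a' b'"
    using \<open>a' < b'\<close> \<open>b' \<le> b\<close> b_le_n unfolding dominated_outside_def by simp
  then show "dominated_outside D n (Min (below_ends D a b)) (Max (below_ends D a b))"
    unfolding a'_def b'_def S_def .
  show "Max (below_ends D a b) - Min (below_ends D a b) < b - a"
    using \<open>b' - a' < b - a\<close> unfolding a'_def b'_def S_def .
qed

lemma dominated_outside_few_below:
  assumes "dominated_outside D n a b"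
  shows "\<exists>\<alpha> \<beta>. dominated_outside D n \<alpha> \<beta> \<and> card (below_ends D \<alpha> \<beta>) \<le> 1"
  using assms
proof (induction "b - a" arbitrary: a b rule: less_induct)
  case less
  show ?case
  proof (cases "card (below_ends D a b) \<le> 1")
    case True
    then show ?thesis
      using less.prems by blast
  next
    case False
    note shrink = dominated_outside_shrink[OF less.prems False]
    show ?thesis
      by (rule less.hyps[OF shrink(2) shrink(1)])
  qed
qed

theorem lemma2p8:
  fixes D :: "nat \<Rightarrow> nat" and n :: nat
  assumes "n \<ge> 1"
    and "\<And>i. i \<le> n \<Longrightarrow> D i > 0"
  shows "\<exists>\<alpha> \<beta>. \<alpha> < \<beta> \<and> \<beta> \<le> n \<and>
     (\<forall>j \<in> {0..<\<alpha>} \<union> {\<beta><..n}. D j > max (D \<alpha>) (D \<beta>)) \<and>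
     card {t \<in> {\<alpha>..\<beta>}. D t < max (D \<alpha>) (D \<beta>)} \<le> 1"
proof -
  have "dominated_outside D n 0 n"
    using assms(1) unfolding dominated_outside_def by auto
  then obtain \<alpha> \<beta> where "dominated_outside D n \<alpha> \<beta>" and "card (below_ends D \<alpha> \<beta>) \<le> 1"
    using dominated_outside_few_below by blast
  then show ?thesis
    unfolding dominated_outside_def by blast
qed

end
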